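(* Let $0<q\leq 1$, let $D\in\mathbb{R}^{n\times d}$ be a frame with frame bounds $0<\mathcal{L}\leq\mathcal{U}<\infty$, $\kappa=\mathcal{U}/\mathcal{L}$, let $A\in\mathbb{R}^{m\times n}$, let $s<a$ be positive integers and $\rho=s/a$. Assume $A$ satisfies the $(D^{\dagger},q)$-RIP of order $s+a$ (with constants $\delta_a$ and $\delta_{s+a}<1$), and let $\Delta=\frac{1+\delta_a}{1-\delta_{s+a}}$. Then for any $h\in\mathbb{R}^n$, with $T$ the index set of the $s$ largest entries of $D^*h$ in magnitude, $$\|D_T^*h\|_q^{q}\leq\theta\|D_{T^c}^*h\|_q^q+\frac{\theta\mathcal{L}^{q/2}a^{1-q/2}\|Ah\|_q^q}{1+\delta_a},$$ where $$\theta=2^{-q/2}\left(1+\sqrt{1+4\kappa^{-2}\Delta^{-2/q}}\right)^{q/2}\kappa^q\Delta\rho^{1-q/2}.$$ In particular, if $\rho^{1-q/2}\left(\rho^{2/q-1}+1\right)^{q/2}\kappa^q(1+\delta_a)<1-\delta_{s+a}$, then $\theta<1$.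
   Context: $D$ is a frame with frame bounds $\mathcal{L},\mathcal{U}$ if $\mathcal{L}\|f\|_2^2\leq\|D^*f\|_2^2\leq\mathcal{U}\|f\|_2^2$ for all $f\in\mathbb{R}^n$; $D^{\dagger}=(DD^* )^{-1}D$. $A$ obeys the $(D^\dagger,q)$-RIP of order $k$ with constant $\delta\in[0,1)$ if $(1-\delta)\|D^\dagger v\|_2^q\leq\|AD^\dagger v\|_q^q\leq(1+\delta)\|D^\dagger v\|_2^q$ for all $v\in\mathbb{R}^d$ with at most $k$ nonzero entries; $\delta_k$ is the smallest such $\delta$. For $S\subset[d]$, $D_S^*h$ denotes $D^*h$ restricted to $S$, and $T^c=[d]\setminus T$. *)

theory Defs
  imports "HOL-Analysis.Analysis"
begin

text \<open>D is an n x d real matrix (type real^'d^'n); D^* is its transpose.\<close>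

definition frame_bounds :: "real^'d^'n \<Rightarrow> real \<Rightarrow> real \<Rightarrow> bool" where
  "frame_bounds D L U \<longleftrightarrow>
     (\<forall>f::real^'n. L * (norm f)\<^sup>2 \<le> (norm (transpose D *v f))\<^sup>2 \<and>
                   (norm (transpose D *v f))\<^sup>2 \<le> U * (norm f)\<^sup>2)"

definition dagger :: "real^'d^'n \<Rightarrow> real^'d^'n" where
  "dagger D = matrix_inv (D ** transpose D) ** D"

definition qnorm_pow_on :: "'i set \<Rightarrow> real \<Rightarrow> real^'i \<Rightarrow> real" where
  "qnorm_pow_on S q x = (\<Sum>i\<in>S. \<bar>x $ i\<bar> powr q)"

definition qnorm_pow :: "real \<Rightarrow> real^'i \<Rightarrow> real" where
  "qnorm_pow q x = qnorm_pow_on UNIV q x"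

definition sparse :: "nat \<Rightarrow> real^'i \<Rightarrow> bool" where
  "sparse k v \<longleftrightarrow> card {i. v $ i \<noteq> 0} \<le> k"

definition rip :: "real^'d^'n \<Rightarrow> real^'n^'m \<Rightarrow> real \<Rightarrow> nat \<Rightarrow> real \<Rightarrow> bool" where
  "rip D A q k \<delta> \<longleftrightarrow> 0 \<le> \<delta> \<and> \<delta> < 1 \<and>
     (\<forall>v::real^'d. sparse k v \<longrightarrow>
        (1 - \<delta>) * norm (dagger D *v v) powr q \<le> qnorm_pow q (A *v (dagger D *v v)) \<and>
        qnorm_pow q (A *v (dagger D *v v)) \<le> (1 + \<delta>) * norm (dagger D *v v) powr q)"

definition rip_const :: "real^'d^'n \<Rightarrow> real^'n^'m \<Rightarrow> real \<Rightarrow> nat \<Rightarrow> real" where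
  "rip_const D A q k = Inf {\<delta>. rip D A q k \<delta>}"

end

theory Submission
  imports Defs
begin

text \<open>Put v = D^* h and cut the complement of T into blocks B0, B1, ... of size a, taking
  the entries of v in order of decreasing magnitude. Every entry of B(j+1) is dominated by the mean
  of |v i|^q over B(j), so the part vR of v outside S = T \<union> B0 satisfies
  ||vR||_2^q \<le> a^(q/2 - 1) r, where r is the q-mass of v on -T. The RIP of order s + a for the
  restriction vS of v to S, together with the RIP of order a on the remaining blocks, bounds
  ||D^\<dagger> vS||_2 in terms of ||A h||_q and r. The frame inequality
  ||vS||^2 = <vS, D^* h> \<le> sqrt U ||D^\<dagger> vS|| ||v|| then becomes a quadratic inequality for ||vS||^2;
  its positive root is where \<theta> comes from, and the power mean inequality on T finishes.
  The hypothesis that T carries the s largest entries of D^* h is not needed.\<close>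

declare transpose_matrix_vector[simp del]

section \<open>Inequalities for real powers\<close>

lemma powr_le_affine:
  fixes u p :: real
  assumes "0 < p" "p \<le> 1" "0 \<le> u"
  shows "u powr p \<le> p * u + (1 - p)"
  using Youngs_inequality_0[of p "1 - p" u 1] assms by (cases "u = 0") auto

lemma powr_add_le:
  fixes x y p :: real
  assumes "0 < p" "p \<le> 1" "0 \<le> x" "0 \<le> y"
  shows "(x + y) powr p \<le> x powr p + y powr p"
proof (cases "x + y = 0")
  case False
  then have xy: "x + y > 0"
    using assms by simp
  have "x / (x + y) + y / (x + y) \<le> (x / (x + y)) powr p + (y / (x + y)) powr p"
    using assms xy powr_mono'[of p 1 "x / (x + y)"] powr_mono'[of p 1 "y / (x + y)"]
    by (intro add_mono) auto
  then have "1 \<le> (x / (x + y)) powr p + (y / (x + y)) powr p"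
    using xy by (simp add: add_divide_distrib[symmetric])
  then have "(x + y) powr p * 1 \<le> (x + y) powr p * ((x / (x + y)) powr p + (y / (x + y)) powr p)"
    by (rule mult_left_mono) simp
  also have "\<dots> = x powr p + y powr p"
    using xy assms by (simp add: powr_divide distrib_left)
  finally show ?thesis
    by simp
qed (use assms in simp)

lemma powr_sum_le:
  fixes f :: "'a \<Rightarrow> real"
  assumes "0 < p" "p \<le> 1" "\<And>i. i \<in> S \<Longrightarrow> 0 \<le> f i"
  shows "(\<Sum>i\<in>S. f i) powr p \<le> (\<Sum>i\<in>S. f i powr p)"
  using assms(3)
proof (induction S rule: infinite_finite_induct)
  case (insert x F)
  then have "(\<Sum>i\<in>insert x F. f i) powr p \<le> f x powr p + (\<Sum>i\<in>F. f i) powr p"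
    using assms by (simp add: powr_add_le sum_nonneg)
  with insert show ?case
    by simp
qed simp_all

lemma sum_powr_le_card_powr:
  fixes f :: "'a \<Rightarrow> real"
  assumes "0 < p" "p \<le> 1" "finite S" "S \<noteq> {}" "\<And>i. i \<in> S \<Longrightarrow> 0 \<le> f i"
  shows "(\<Sum>i\<in>S. f i powr p) \<le> real (card S) powr (1 - p) * (\<Sum>i\<in>S. f i) powr p"
proof -
  define n where "n = real (card S)"
  define m where "m = (\<Sum>i\<in>S. f i) / n"
  have n: "n > 0"
    using assms by (simp add: n_def card_gt_0_iff)
  have "m \<ge> 0"
    unfolding m_def using assms n by (simp add: sum_nonneg)
  show ?thesis
  proof (cases "m = 0")
    case True
    then have "(\<Sum>i\<in>S. f i) = 0"
      using n by (simp add: m_def)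
    then have "\<forall>i\<in>S. f i = 0"
      using sum_nonneg_eq_0_iff[OF assms(3)] assms(5) by blast
    then show ?thesis
      by simp
  next
    case False
    with \<open>m \<ge> 0\<close> have m: "m > 0"
      by simp
    have "(\<Sum>i\<in>S. f i powr p) = (\<Sum>i\<in>S. m powr p * (f i / m) powr p)"
      using m assms by (intro sum.cong) (auto simp: powr_divide)
    also have "\<dots> \<le> (\<Sum>i\<in>S. m powr p * (p * (f i / m) + (1 - p)))"
      using assms m by (intro sum_mono mult_left_mono powr_le_affine) auto
    also have "\<dots> = (\<Sum>i\<in>S. (m powr p * p / m) * f i + m powr p * (1 - p))"
      using m by (intro sum.cong) (auto simp: field_simps)
    also have "\<dots> = m powr p * (p / m * (\<Sum>i\<in>S. f i) + n * (1 - p))"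
      by (simp only: sum.distrib sum_distrib_left[symmetric] sum_constant) (simp add: n_def algebra_simps)
    also have "\<dots> = m powr p * n"
      using m n by (simp add: m_def field_simps)
    also have "\<dots> = n powr (1 - p) * (m powr p * n powr p)"
      using n by (simp add: powr_add[symmetric])
    also have "m powr p * n powr p = (\<Sum>i\<in>S. f i) powr p"
      using m n by (simp add: m_def powr_divide)
    finally show ?thesis
      by (simp add: n_def)
  qed
qed

lemma norm_sum_powr_le:
  fixes w :: "'j \<Rightarrow> 'a::real_normed_vector"
  assumes "0 < q" "q \<le> 1"
  shows "norm (\<Sum>j\<in>J. w j) powr q \<le> (\<Sum>j\<in>J. norm (w j) powr q)"
proof -
  have "norm (\<Sum>j\<in>J. w j) powr q \<le> (\<Sum>j\<in>J. norm (w j)) powr q"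
    using assms by (intro powr_mono2 norm_sum) auto
  also have "\<dots> \<le> (\<Sum>j\<in>J. norm (w j) powr q)"
    using assms by (intro powr_sum_le) auto
  finally show ?thesis .
qed

lemma powr_eq_square_powr_half:
  "0 \<le> (y::real) \<Longrightarrow> y powr q = (y\<^sup>2) powr (q / 2)"
proof (cases "y = 0")
  case False
  assume "0 \<le> y"
  with False have "y\<^sup>2 = y powr 2"
    by (simp add: powr_numeral)
  then show ?thesis
    by (simp add: powr_powr)
qed simp

lemma powr_powr_two_over:
  "0 < q \<Longrightarrow> 0 \<le> x \<Longrightarrow> (x powr q) powr (2 / q) = x\<^sup>2" for x q :: real
  by (simp add: powr_powr powr_numeral)


section \<open>Frames and the canonical dual frame\<close>

lemma inner_transpose_matrix_vector:
  "inner (transpose D *v x) y = inner x ((D::real^'d^'n) *v y)"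
  by (simp add: transpose_matrix_vector dot_lmul_matrix)

lemma frame_lower_bound:
  "frame_bounds D L U \<Longrightarrow> L * (norm f)\<^sup>2 \<le> (norm (transpose D *v f))\<^sup>2"
  unfolding frame_bounds_def by blast

lemma frame_upper_bound:
  "frame_bounds D L U \<Longrightarrow> (norm (transpose D *v f))\<^sup>2 \<le> U * (norm f)\<^sup>2"
  unfolding frame_bounds_def by blast

lemma frame_Gram_invertible:
  fixes D :: "real^'d^'n"
  assumes "frame_bounds D L U" "0 < L"
  shows "invertible (D ** transpose D)"
proof -
  have "x = 0" if "(D ** transpose D) *v x = 0" for x :: "real^'n"
  proof -
    have "(norm (transpose D *v x))\<^sup>2 = inner x ((D ** transpose D) *v x)"
      by (simp add: inner_transpose_matrix_vector[symmetric] matrix_vector_mul_assoc[symmetric]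
          power2_norm_eq_inner)
    then have "L * (norm x)\<^sup>2 \<le> 0"
      using frame_lower_bound[OF assms(1), of x] that by simp
    with \<open>0 < L\<close> show "x = 0"
      by (simp add: mult_le_0_iff)
  qed
  then have "inj ((*v) (D ** transpose D))"
    by (simp add: linear_injective_0)
  then show ?thesis
    by (simp add: invertible_left_inverse matrix_left_invertible_injective)
qed

lemma invertible_matrix_inv:
  "invertible (M::real^'n^'n) \<Longrightarrow> M ** matrix_inv M = mat 1 \<and> matrix_inv M ** M = mat 1"
  unfolding matrix_inv_def invertible_def by (rule someI_ex)

lemma Gram_matrix_inv:
  fixes D :: "real^'d^'n"
  assumes "frame_bounds D L U" "0 < L"
  shows "(D ** transpose D) ** matrix_inv (D ** transpose D) = mat 1"
    and "matrix_inv (D ** transpose D) ** (D ** transpose D) = mat 1"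
  using invertible_matrix_inv[OF frame_Gram_invertible[OF assms]] by auto

lemma dagger_transpose_cancel:
  fixes D :: "real^'d^'n"
  assumes "frame_bounds D L U" "0 < L"
  shows "dagger D *v (transpose D *v h) = h"
  using Gram_matrix_inv(2)[OF assms]
  by (simp add: dagger_def matrix_vector_mul_assoc matrix_mul_assoc)

lemma frame_operator_dagger:
  fixes D :: "real^'d^'n"
  assumes "frame_bounds D L U" "0 < L"
  shows "D *v (transpose D *v (dagger D *v x)) = D *v x"
proof -
  have "D ** (transpose D ** (matrix_inv (D ** transpose D) ** D))
      = ((D ** transpose D) ** matrix_inv (D ** transpose D)) ** D"
    by (simp add: matrix_mul_assoc)
  then show ?thesis
    using Gram_matrix_inv(1)[OF assms] by (simp add: dagger_def matrix_vector_mul_assoc)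
qed

lemma inner_transpose_dagger:
  fixes D :: "real^'d^'n"
  assumes "frame_bounds D L U" "0 < L"
  shows "inner x (transpose D *v h) = inner (transpose D *v (dagger D *v x)) (transpose D *v h)"
  by (metis frame_operator_dagger[OF assms] inner_commute inner_transpose_matrix_vector)

lemma norm_transpose_dagger_le:
  fixes D :: "real^'d^'n"
  assumes "frame_bounds D L U" "0 < L"
  shows "norm (transpose D *v (dagger D *v x)) \<le> norm x"
proof -
  let ?y = "transpose D *v (dagger D *v x)"
  have "(norm ?y)\<^sup>2 = inner x ?y"
    by (metis inner_transpose_dagger[OF assms] inner_commute power2_norm_eq_inner)
  also have "\<dots> \<le> norm x * norm ?y"
    by (rule norm_cauchy_schwarz)
  finally show ?thesis
    by (cases "?y = 0") (simp_all add: power2_eq_square)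
qed

lemma norm_dagger_le:
  fixes D :: "real^'d^'n"
  assumes "frame_bounds D L U" "0 < L"
  shows "L * (norm (dagger D *v x))\<^sup>2 \<le> (norm x)\<^sup>2"
  using frame_lower_bound[OF assms(1)] norm_transpose_dagger_le[OF assms]
  by (meson norm_ge_zero order.trans power_mono)

lemma norm_dagger_powr_le:
  fixes D :: "real^'d^'n"
  assumes "frame_bounds D L U" "0 < L" "0 < q"
  shows "norm (dagger D *v x) powr q \<le> L powr (- q / 2) * norm x powr q"
proof -
  have "(norm (dagger D *v x))\<^sup>2 \<le> (norm x)\<^sup>2 / L"
    using norm_dagger_le[OF assms(1,2)] assms(2) by (simp add: field_simps)
  then have "((norm (dagger D *v x))\<^sup>2) powr (q / 2) \<le> ((norm x)\<^sup>2 / L) powr (q / 2)"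
    using assms(3) by (simp add: powr_mono2)
  also have "\<dots> = L powr (- q / 2) * ((norm x)\<^sup>2) powr (q / 2)"
    using assms(2) by (simp add: powr_divide powr_minus_divide)
  finally show ?thesis
    by (simp add: powr_eq_square_powr_half[of "norm x" q] powr_eq_square_powr_half[of "norm (dagger D *v x)" q])
qed

lemma inner_transpose_le_dagger:
  fixes D :: "real^'d^'n"
  assumes "frame_bounds D L U" "0 < L"
  shows "inner x (transpose D *v h) \<le> sqrt U * norm (dagger D *v x) * norm (transpose D *v h)"
proof -
  let ?y = "dagger D *v x"
  have "norm (transpose D *v ?y) \<le> sqrt (U * (norm ?y)\<^sup>2)"
    by (rule real_le_rsqrt) (rule frame_upper_bound[OF assms(1)])
  also have "\<dots> = sqrt U * norm ?y"
    by (simp add: real_sqrt_mult)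
  finally have upper: "norm (transpose D *v ?y) \<le> sqrt U * norm ?y" .
  have "inner x (transpose D *v h) = inner (transpose D *v ?y) (transpose D *v h)"
    by (rule inner_transpose_dagger[OF assms])
  also have "\<dots> \<le> norm (transpose D *v ?y) * norm (transpose D *v h)"
    by (rule norm_cauchy_schwarz)
  also have "\<dots> \<le> sqrt U * norm ?y * norm (transpose D *v h)"
    using upper by (simp add: mult_right_mono)
  finally show ?thesis .
qed

definition restrict_vec :: "'i set \<Rightarrow> real^'i \<Rightarrow> real^'i" where
  "restrict_vec S v = (\<chi> i. if i \<in> S then v $ i else 0)"

lemma restrict_vec_nth [simp]: "restrict_vec S v $ i = (if i \<in> S then v $ i else 0)"
  by (simp add: restrict_vec_def)

lemma restrict_vec_add_compl: "restrict_vec S v + restrict_vec (- S) v = v"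
  by (simp add: vec_eq_iff)

lemma restrict_vec_Un_disjoint:
  "S \<inter> S' = {} \<Longrightarrow> restrict_vec (S \<union> S') v = restrict_vec S v + restrict_vec S' v"
  by (auto simp: vec_eq_iff)

lemma restrict_vec_Union:
  assumes "finite J" "disjoint_family_on B J"
  shows "restrict_vec (\<Union>j\<in>J. B j) v = (\<Sum>j\<in>J. restrict_vec (B j) v)"
  using assms
proof (induction J rule: finite_induct)
  case (insert x F)
  then have "B x \<inter> (\<Union>j\<in>F. B j) = {}"
    by (auto simp: disjoint_family_on_def)
  with insert show ?case
    by (simp add: restrict_vec_Un_disjoint disjoint_family_on_insert)
qed (simp add: vec_eq_iff)

lemma norm_sq_eq_sum: "(norm (v::real^'i))\<^sup>2 = (\<Sum>i\<in>UNIV. (v $ i)\<^sup>2)"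
  by (simp add: norm_vec_def L2_set_def sum_nonneg)

lemma norm_restrict_vec_sq: "(norm (restrict_vec S v))\<^sup>2 = (\<Sum>i\<in>S. (v $ i)\<^sup>2)"
proof -
  have "(norm (restrict_vec S v))\<^sup>2 = (\<Sum>i\<in>UNIV. if i \<in> S then (v $ i)\<^sup>2 else 0)"
    unfolding norm_sq_eq_sum by (intro sum.cong) auto
  then show ?thesis
    by (simp add: sum.If_cases)
qed

lemma inner_restrict_vec_self: "inner (restrict_vec S v) v = (norm (restrict_vec S v))\<^sup>2"
proof -
  have "inner (restrict_vec S v) v = (\<Sum>i\<in>UNIV. if i \<in> S then (v $ i)\<^sup>2 else 0)"
    unfolding inner_vec_def by (intro sum.cong) (auto simp: power2_eq_square)
  then show ?thesis
    by (simp add: sum.If_cases norm_restrict_vec_sq)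
qed

lemma norm_sq_restrict_vec_split:
  "(norm v)\<^sup>2 = (norm (restrict_vec S v))\<^sup>2 + (norm (restrict_vec (- S) v))\<^sup>2"
proof -
  have "(\<Sum>i\<in>S \<union> - S. (v $ i)\<^sup>2) = (\<Sum>i\<in>S. (v $ i)\<^sup>2) + (\<Sum>i\<in>- S. (v $ i)\<^sup>2)"
    by (rule sum.union_disjoint) auto
  then show ?thesis
    by (simp add: norm_sq_eq_sum[of v] norm_restrict_vec_sq)
qed

lemma sparse_restrict_vec: "card S \<le> k \<Longrightarrow> sparse k (restrict_vec S v)"
  unfolding sparse_def by (rule order.trans[OF card_mono]) auto

lemma qnorm_pow_on_nonneg: "0 \<le> qnorm_pow_on S q v"
  by (simp add: qnorm_pow_on_def sum_nonneg)

lemma qnorm_pow_nonneg: "0 \<le> qnorm_pow q v"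
  by (simp add: qnorm_pow_def qnorm_pow_on_nonneg)

lemma qnorm_pow_diff_le:
  assumes "0 < q" "q \<le> 1"
  shows "qnorm_pow q (x - y) \<le> qnorm_pow q x + qnorm_pow q y"
proof -
  have "\<bar>x $ i - y $ i\<bar> powr q \<le> \<bar>x $ i\<bar> powr q + \<bar>y $ i\<bar> powr q" for i
    using assms powr_mono2[of q "\<bar>x $ i - y $ i\<bar>" "\<bar>x $ i\<bar> + \<bar>y $ i\<bar>"]
      powr_add_le[of q "\<bar>x $ i\<bar>" "\<bar>y $ i\<bar>"] abs_triangle_ineq4[of "x $ i" "y $ i"] by simp
  then show ?thesis
    by (simp add: qnorm_pow_def qnorm_pow_on_def sum.distrib[symmetric] sum_mono)
qed

lemma qnorm_pow_sum_le:
  fixes x :: "'j \<Rightarrow> real^'i"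
  assumes "0 < q" "q \<le> 1"
  shows "qnorm_pow q (\<Sum>j\<in>J. x j) \<le> (\<Sum>j\<in>J. qnorm_pow q (x j))"
proof (induction J rule: infinite_finite_induct)
  case (insert j J)
  have "qnorm_pow q (x j + (\<Sum>j\<in>J. x j)) \<le> qnorm_pow q (x j) + qnorm_pow q (\<Sum>j\<in>J. x j)"
    using qnorm_pow_diff_le[OF assms, of "x j" "- (\<Sum>j\<in>J. x j)"]
    by (simp add: qnorm_pow_def qnorm_pow_on_def)
  with insert show ?case
    by simp
qed (simp_all add: qnorm_pow_def qnorm_pow_on_def)

lemma norm_restrict_vec_fourth_le:
  fixes D :: "real^'d^'n" and h :: "real^'n"
  assumes "frame_bounds D L U" "0 < L" "0 \<le> U"
  defines "v \<equiv> transpose D *v h"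
  shows "((norm (restrict_vec S v))\<^sup>2)\<^sup>2
    \<le> U * (norm (dagger D *v restrict_vec S v))\<^sup>2
      * ((norm (restrict_vec S v))\<^sup>2 + (norm (restrict_vec (- S) v))\<^sup>2)"
proof -
  have "(norm (restrict_vec S v))\<^sup>2 \<le> sqrt U * norm (dagger D *v restrict_vec S v) * norm v"
    using inner_transpose_le_dagger[OF assms(1,2), of "restrict_vec S v" h]
    by (simp add: v_def inner_restrict_vec_self)
  then have "((norm (restrict_vec S v))\<^sup>2)\<^sup>2 \<le> (sqrt U * norm (dagger D *v restrict_vec S v) * norm v)\<^sup>2"
    by (rule power_mono) simp
  also have "\<dots> = U * (norm (dagger D *v restrict_vec S v))\<^sup>2 * (norm v)\<^sup>2"
    using assms(3) by (simp add: power_mult_distrib)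
  finally show ?thesis
    by (simp add: norm_sq_restrict_vec_split[of v S])
qed

lemma qnorm_pow_on_le_card_powr_norm:
  fixes v :: "real^'i"
  assumes "0 < q" "q \<le> 2" "T \<subseteq> S"
  shows "qnorm_pow_on T q v \<le> real (card T) powr (1 - q / 2) * ((norm (restrict_vec S v))\<^sup>2) powr (q / 2)"
proof (cases "T = {}")
  case True
  then show ?thesis
    by (simp add: qnorm_pow_on_def)
next
  case False
  have "qnorm_pow_on T q v = (\<Sum>i\<in>T. ((v $ i)\<^sup>2) powr (q / 2))"
    unfolding qnorm_pow_on_def by (intro sum.cong) (simp_all add: powr_eq_square_powr_half[of "\<bar>_\<bar>" q])
  also have "\<dots> \<le> real (card T) powr (1 - q / 2) * (\<Sum>i\<in>T. (v $ i)\<^sup>2) powr (q / 2)"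
    using assms False by (intro sum_powr_le_card_powr) auto
  also have "\<dots> \<le> real (card T) powr (1 - q / 2) * (\<Sum>i\<in>S. (v $ i)\<^sup>2) powr (q / 2)"
    using assms by (intro mult_left_mono powr_mono2 sum_mono2) (auto simp: sum_nonneg)
  finally show ?thesis
    by (simp add: norm_restrict_vec_sq)
qed

section \<open>Blocks of decreasing entries\<close>

lemma nat_div_eq_iff: "0 < a \<Longrightarrow> k div a = j \<longleftrightarrow> j * a \<le> k \<and> k < j * a + a"
  for a k j :: nat
  by (auto simp: div_nat_eqI algebra_simps dest: sym intro!: dividend_less_times_div)

lemma card_div_fiber_le: "0 < a \<Longrightarrow> card {k. k < n \<and> k div a = j} \<le> a"
  for a n j :: nat
proof -
  assume "0 < a"
  then have "{k. k < n \<and> k div a = j} \<subseteq> {j * a..<j * a + a}"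
    by (auto simp: nat_div_eq_iff)
  from card_mono[OF finite_atLeastLessThan this] show ?thesis
    by simp
qed

lemma card_div_fiber_eq: "0 < a \<Longrightarrow> l < n \<Longrightarrow> l div a = Suc j \<Longrightarrow> card {k. k < n \<and> k div a = j} = a"
  for a n j l :: nat
proof -
  assume "0 < a" "l < n" "l div a = Suc j"
  then have "{k. k < n \<and> k div a = j} = {j * a..<j * a + a}"
    by (auto simp: nat_div_eq_iff)
  then show ?thesis
    by simp
qed

lemma decreasing_enumeration:
  fixes g :: "'a \<Rightarrow> real"
  assumes "finite C"
  obtains ys where "set ys = C" "distinct ys"
    "\<And>k l. k \<le> l \<Longrightarrow> l < length ys \<Longrightarrow> g (ys ! l) \<le> g (ys ! k)"
proof -
  obtain xs where xs: "set xs = C" "distinct xs"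
    using finite_distinct_list[OF assms] by blast
  define ys where "ys = sort_key (\<lambda>i. - g i) xs"
  show thesis
  proof (rule that[of ys])
    show "set ys = C" "distinct ys"
      using xs by (simp_all add: ys_def)
    show "g (ys ! l) \<le> g (ys ! k)" if "k \<le> l" "l < length ys" for k l
      using sorted_nth_mono[of "map (\<lambda>i. - g i) ys" k l] that by (simp add: ys_def)
  qed
qed

definition chunk :: "'a list \<Rightarrow> nat \<Rightarrow> nat \<Rightarrow> 'a set" where
  "chunk ys a j = (!) ys ` {k. k < length ys \<and> k div a = j}"

lemma chunk_subset: "chunk ys a j \<subseteq> set ys"
  by (auto simp: chunk_def)

lemma card_chunk_le: "0 < a \<Longrightarrow> card (chunk ys a j) \<le> a"
  unfolding chunk_def
  using card_image_le[of "{k. k < length ys \<and> k div a = j}" "(!) ys"] card_div_fiber_le[of a "length ys" j]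
  by simp

lemma card_chunk_eq:
  assumes "distinct ys" "0 < a" "chunk ys a (Suc j) \<noteq> {}"
  shows "card (chunk ys a j) = a"
proof -
  obtain l where "l < length ys" "l div a = Suc j"
    using assms(3) by (auto simp: chunk_def)
  moreover have "inj_on ((!) ys) {k. k < length ys \<and> k div a = j}"
    using assms(1) by (auto simp: inj_on_def nth_eq_iff_index_eq)
  ultimately show ?thesis
    unfolding chunk_def using card_div_fiber_eq[OF assms(2)] by (simp add: card_image)
qed

lemma disjoint_family_chunk:
  assumes "distinct ys"
  shows "disjoint_family (chunk ys a)"
  unfolding disjoint_family_on_def
proof (intro ballI impI)
  fix j j' :: nat
  let ?K = "\<lambda>j. {k. k < length ys \<and> k div a = j}"
  assume "j \<noteq> j'"
  have "inj_on ((!) ys) {..<length ys}"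
    using assms by (simp add: inj_on_nth)
  then have "(!) ys ` (?K j \<inter> ?K j') = (!) ys ` ?K j \<inter> (!) ys ` ?K j'"
    by (rule inj_on_image_Int) auto
  moreover have "?K j \<inter> ?K j' = {}"
    using \<open>j \<noteq> j'\<close> by auto
  ultimately show "chunk ys a j \<inter> chunk ys a j' = {}"
    by (simp add: chunk_def)
qed

lemma chunk_eq_empty:
  assumes "length ys div a < j"
  shows "chunk ys a j = {}"
proof -
  have "k div a \<noteq> j" if "k < length ys" for k
    using div_le_mono[of k "length ys" a] that assms by simp
  then show ?thesis
    by (simp add: chunk_def)
qed

lemma Union_chunk: "(\<Union>j<Suc (length ys div a). chunk ys a j) = set ys"
proof
  show "(\<Union>j<Suc (length ys div a). chunk ys a j) \<subseteq> set ys"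
    using chunk_subset[of ys a] by (simp add: UN_subset_iff)
  show "set ys \<subseteq> (\<Union>j<Suc (length ys div a). chunk ys a j)"
  proof
    fix x assume "x \<in> set ys"
    then obtain k where "k < length ys" "x = ys ! k"
      by (auto simp: in_set_conv_nth)
    then show "x \<in> (\<Union>j<Suc (length ys div a). chunk ys a j)"
      using div_le_mono[of k "length ys" a] by (auto simp: chunk_def)
  qed
qed

lemma chunk_Suc_after:
  assumes "i \<in> chunk ys a (Suc j)" "k \<in> chunk ys a j"
  obtains l l' where "i = ys ! l" "k = ys ! l'" "l' \<le> l" "l < length ys"
proof -
  obtain l l' where "i = ys ! l" "l < length ys" "l div a = Suc j" "k = ys ! l'" "l' div a = j"
    using assms by (auto simp: chunk_def)
  moreover from calculation have "l' \<le> l"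
    by (metis Suc_n_not_le_n div_le_mono nat_le_linear)
  ultimately show thesis
    using that by blast
qed

lemma sorted_blocks:
  fixes g :: "'a \<Rightarrow> real" and C :: "'a set" and a :: nat
  assumes "finite C" "0 < a"
  obtains B :: "nat \<Rightarrow> 'a set" and N :: nat where
    "\<And>j. B j \<subseteq> C" "\<And>j. card (B j) \<le> a" "disjoint_family B"
    "(\<Union>j<N. B j) = C" "B N = {}" "\<And>j. B (Suc j) \<noteq> {} \<Longrightarrow> card (B j) = a"
    "\<And>j i k. i \<in> B (Suc j) \<Longrightarrow> k \<in> B j \<Longrightarrow> g i \<le> g k"
proof -
  obtain ys where ys: "set ys = C" "distinct ys"
    and decreasing: "\<And>k l. k \<le> l \<Longrightarrow> l < length ys \<Longrightarrow> g (ys ! l) \<le> g (ys ! k)"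
    using decreasing_enumeration[OF assms(1)] by blast
  show thesis
  proof (rule that[of "chunk ys a" "Suc (length ys div a)"])
    show "chunk ys a j \<subseteq> C" for j
      using chunk_subset[of ys a j] ys(1) by simp
    show "card (chunk ys a j) \<le> a" for j
      using card_chunk_le[OF assms(2)] .
    show "disjoint_family (chunk ys a)"
      using disjoint_family_chunk[OF ys(2)] .
    show "(\<Union>j<Suc (length ys div a). chunk ys a j) = C"
      unfolding ys(1)[symmetric] by (rule Union_chunk)
    show "chunk ys a (Suc (length ys div a)) = {}"
      by (simp add: chunk_eq_empty)
    show "card (chunk ys a j) = a" if "chunk ys a (Suc j) \<noteq> {}" for j
      using card_chunk_eq[OF ys(2) assms(2) that] .
    show "g i \<le> g k" if members: "i \<in> chunk ys a (Suc j)" "k \<in> chunk ys a j" for i j k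
    proof -
      obtain l l' where "i = ys ! l" "k = ys ! l'" "l' \<le> l" "l < length ys"
        using chunk_Suc_after[OF members] .
      then show ?thesis
        using decreasing by simp
    qed
  qed
qed

lemma norm_restrict_vec_powr_le:
  fixes v :: "real^'i"
  assumes "0 < q" "0 < a" "card B \<le> a" "card B' = a"
    and dominated: "\<And>i k. i \<in> B \<Longrightarrow> k \<in> B' \<Longrightarrow> \<bar>v $ i\<bar> \<le> \<bar>v $ k\<bar>"
  shows "norm (restrict_vec B v) powr q \<le> real a powr (q / 2 - 1) * qnorm_pow_on B' q v"
proof -
  define Q where "Q = qnorm_pow_on B' q v"
  have "Q \<ge> 0"
    by (simp add: Q_def qnorm_pow_on_nonneg)
  have entry: "(v $ i)\<^sup>2 \<le> (Q / a) powr (2 / q)" if "i \<in> B" for i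
  proof -
    have "real a * \<bar>v $ i\<bar> powr q = (\<Sum>k\<in>B'. \<bar>v $ i\<bar> powr q)"
      using assms(4) by simp
    also have "\<dots> \<le> Q"
      unfolding Q_def qnorm_pow_on_def using assms(1) dominated[OF that]
      by (intro sum_mono powr_mono2) auto
    finally have "\<bar>v $ i\<bar> powr q \<le> Q / a"
      using assms(2) by (simp add: field_simps)
    then have "(\<bar>v $ i\<bar> powr q) powr (2 / q) \<le> (Q / a) powr (2 / q)"
      using assms(1) by (intro powr_mono2) auto
    moreover have "(\<bar>v $ i\<bar> powr q) powr (2 / q) = (v $ i)\<^sup>2"
      using assms(1) by (simp add: powr_powr powr_numeral)
    ultimately show ?thesis
      by simp
  qed
  have "(norm (restrict_vec B v))\<^sup>2 \<le> (\<Sum>i\<in>B. (Q / a) powr (2 / q))"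
    unfolding norm_restrict_vec_sq by (rule sum_mono) (rule entry)
  also have "\<dots> \<le> a * (Q / a) powr (2 / q)"
    using assms(3) by (simp add: mult_right_mono)
  finally have "((norm (restrict_vec B v))\<^sup>2) powr (q / 2) \<le> (a * (Q / a) powr (2 / q)) powr (q / 2)"
    using assms(1) by (intro powr_mono2) auto
  also have "\<dots> = real a powr (q / 2) * (Q / a)"
    using assms(1,2) \<open>Q \<ge> 0\<close> by (simp add: powr_mult powr_powr)
  also have "\<dots> = real a powr (q / 2 - 1) * Q"
    using assms(2) by (simp add: powr_diff)
  finally show ?thesis
    by (simp add: Q_def powr_eq_square_powr_half[of "norm (restrict_vec B v)" q])
qed

lemma UN_lessThan_Suc_shift:
  assumes "disjoint_family B" "B N = {}"
  shows "(\<Union>j<N. B (Suc j)) = (\<Union>j<N. B j) - B 0"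
proof
  have "B (Suc j) \<inter> B 0 = {}" for j
    using assms(1) by (simp add: disjoint_family_on_def)
  moreover have "Suc j < N" if "j < N" "B (Suc j) \<noteq> {}" for j
    using that assms(2) Suc_lessI by blast
  ultimately show "(\<Union>j<N. B (Suc j)) \<subseteq> (\<Union>j<N. B j) - B 0"
    by blast
  show "(\<Union>j<N. B j) - B 0 \<subseteq> (\<Union>j<N. B (Suc j))"
  proof
    fix x assume "x \<in> (\<Union>j<N. B j) - B 0"
    then obtain k where "k < N" "x \<in> B k" "x \<notin> B 0"
      by blast
    with assms(2) show "x \<in> (\<Union>j<N. B (Suc j))"
      by (cases k) (auto simp: less_Suc_eq)
  qed
qed

lemma block_decomposition:
  fixes v :: "real^'d" and C :: "'d set"
  assumes "0 < q" "0 < a"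
  obtains B :: "nat \<Rightarrow> 'd set" and N :: nat where
    "B 0 \<subseteq> C" "\<And>j. card (B j) \<le> a"
    "restrict_vec (C - B 0) v = (\<Sum>j<N. restrict_vec (B (Suc j)) v)"
    "(\<Sum>j<N. norm (restrict_vec (B (Suc j)) v) powr q) \<le> real a powr (q / 2 - 1) * qnorm_pow_on C q v"
proof -
  obtain B N where B: "\<And>j. B j \<subseteq> C" "\<And>j. card (B j) \<le> a" "disjoint_family B"
    "(\<Union>j<N. B j) = C" "B N = {}" "\<And>j. B (Suc j) \<noteq> {} \<Longrightarrow> card (B j) = a"
    "\<And>j i k. i \<in> B (Suc j) \<Longrightarrow> k \<in> B j \<Longrightarrow> \<bar>v $ i\<bar> \<le> \<bar>v $ k\<bar>"
    using sorted_blocks[OF finite assms(2), where g = "\<lambda>i. \<bar>v $ i\<bar>" and C = C] by blast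
  have "(\<Union>j<N. B (Suc j)) = C - B 0"
    using UN_lessThan_Suc_shift[OF B(3,5)] B(4) by simp
  moreover have "disjoint_family_on (\<lambda>j. B (Suc j)) {..<N}"
    using B(3) by (simp add: disjoint_family_on_def)
  ultimately have rest: "restrict_vec (C - B 0) v = (\<Sum>j<N. restrict_vec (B (Suc j)) v)"
    by (metis finite_lessThan restrict_vec_Union)
  have block: "norm (restrict_vec (B (Suc j)) v) powr q \<le> real a powr (q / 2 - 1) * qnorm_pow_on (B j) q v" for j
  proof (cases "B (Suc j) = {}")
    case True
    then have "restrict_vec (B (Suc j)) v = 0"
      by (simp add: vec_eq_iff)
    then show ?thesis
      by (simp add: qnorm_pow_on_nonneg)
  next
    case False
    then show ?thesis
      using assms B(2,6,7) by (intro norm_restrict_vec_powr_le) auto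
  qed
  have "(\<Sum>j<N. norm (restrict_vec (B (Suc j)) v) powr q) \<le> (\<Sum>j<N. real a powr (q / 2 - 1) * qnorm_pow_on (B j) q v)"
    by (rule sum_mono) (rule block)
  also have "\<dots> = real a powr (q / 2 - 1) * (\<Sum>j<N. \<Sum>i\<in>B j. \<bar>v $ i\<bar> powr q)"
    by (simp add: qnorm_pow_on_def sum_distrib_left)
  also have "(\<Sum>j<N. \<Sum>i\<in>B j. \<bar>v $ i\<bar> powr q) = qnorm_pow_on C q v"
    unfolding qnorm_pow_on_def B(4)[symmetric]
    using B(3) by (intro sum.UNION_disjoint[symmetric]) (auto simp: disjoint_family_on_def)
  finally show ?thesis
    using that B(1,2) rest by blast
qed

lemma rip_mono: "rip D A q k \<delta> \<Longrightarrow> k' \<le> k \<Longrightarrow> rip D A q k' \<delta>"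
  unfolding rip_def sparse_def by (meson order.trans)

lemma two_sided_bound_iff: "(1 - \<delta>) * c \<le> x \<and> x \<le> (1 + \<delta>) * c \<longleftrightarrow> \<bar>x - c\<bar> \<le> \<delta> * c"
  for x c \<delta> :: real
  by (auto simp: algebra_simps)

lemma rip_rip_const:
  assumes "rip D A q k \<delta>"
  shows "rip D A q k (rip_const D A q k)"
proof -
  let ?S = "{\<delta>. rip D A q k \<delta>}"
  have S: "?S \<noteq> {}" "bdd_below ?S"
    using assms by (auto simp: rip_def intro: bdd_belowI[of _ 0])
  have "0 \<le> rip_const D A q k"
    unfolding rip_const_def using S by (intro cInf_greatest) (auto simp: rip_def)
  moreover have "rip_const D A q k \<le> \<delta>"
    unfolding rip_const_def using assms S by (intro cInf_lower) auto
  then have "rip_const D A q k < 1"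
    using assms by (simp add: rip_def)
  moreover have "\<bar>x - c\<bar> \<le> rip_const D A q k * c"
    if "0 \<le> c" and bounds: "\<forall>\<delta>'\<in>?S. \<bar>x - c\<bar> \<le> \<delta>' * c" for x c :: real
  proof (cases "c = 0")
    case True
    then show ?thesis
      using bounds assms by auto
  next
    case False
    with \<open>0 \<le> c\<close> have "\<bar>x - c\<bar> / c \<le> \<delta>'" if "\<delta>' \<in> ?S" for \<delta>'
      using bounds that by (simp add: divide_le_eq)
    then have "\<bar>x - c\<bar> / c \<le> rip_const D A q k"
      unfolding rip_const_def using S by (intro cInf_greatest) auto
    with False \<open>0 \<le> c\<close> show ?thesis
      by (simp add: divide_le_eq mult.commute)
  qed
  ultimately show ?thesis
    by (auto simp: rip_def two_sided_bound_iff)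
qed

lemma rip_head_bound:
  fixes D :: "real^'d^'n" and A :: "real^'n^'m"
  assumes "frame_bounds D L U" "0 < L" "0 < q" "q \<le> 1"
    and "rip D A q k \<delta>k" "rip D A q a \<delta>a" "sparse k u" "\<And>j. j \<in> J \<Longrightarrow> sparse a (w j)"
    and decomposition: "u + (\<Sum>j\<in>J. w j) = transpose D *v h"
  shows "(1 - \<delta>k) * norm (dagger D *v u) powr q
    \<le> qnorm_pow q (A *v h) + (1 + \<delta>a) * L powr (- q / 2) * (\<Sum>j\<in>J. norm (w j) powr q)"
proof -
  define Y where "Y j = A *v (dagger D *v w j)" for j
  have "A *v (dagger D *v u) = A *v h - (\<Sum>j\<in>J. Y j)"
    using arg_cong[OF decomposition, of "\<lambda>x. A *v (dagger D *v x)"]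
    by (simp add: Y_def dagger_transpose_cancel[OF assms(1,2)] matrix_vector_right_distrib
        linear_sum[OF matrix_vector_mul_linear] eq_diff_eq)
  moreover have "(1 - \<delta>k) * norm (dagger D *v u) powr q \<le> qnorm_pow q (A *v (dagger D *v u))"
    using assms(5,7) by (simp add: rip_def)
  ultimately have "(1 - \<delta>k) * norm (dagger D *v u) powr q
      \<le> qnorm_pow q (A *v h) + qnorm_pow q (\<Sum>j\<in>J. Y j)"
    using qnorm_pow_diff_le[OF assms(3,4)] by (metis order.trans)
  also have "qnorm_pow q (\<Sum>j\<in>J. Y j) \<le> (\<Sum>j\<in>J. qnorm_pow q (Y j))"
    by (rule qnorm_pow_sum_le[OF assms(3,4)])
  also have "\<dots> \<le> (\<Sum>j\<in>J. (1 + \<delta>a) * norm (dagger D *v w j) powr q)"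
    using assms(6,8) by (intro sum_mono) (simp add: rip_def Y_def)
  also have "\<dots> \<le> (\<Sum>j\<in>J. (1 + \<delta>a) * (L powr (- q / 2) * norm (w j) powr q))"
    using assms(6) norm_dagger_powr_le[OF assms(1-3)]
    by (intro sum_mono mult_left_mono) (auto simp: rip_def)
  finally show ?thesis
    by (simp add: sum_distrib_left mult.assoc)
qed

section \<open>The constant \<theta>\<close>

definition quad_root :: "real \<Rightarrow> real" where
  "quad_root c = (1 + sqrt (1 + 4 / c)) / 2"

lemma quad_root_ge_1: "0 < c \<Longrightarrow> 1 \<le> quad_root c"
  by (simp add: quad_root_def)

lemma quad_root_square: "0 < c \<Longrightarrow> (quad_root c)\<^sup>2 = quad_root c + 1 / c"
  by (simp add: quad_root_def power2_eq_square field_simps)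

lemma le_quad_root:
  fixes y c W :: real
  assumes "0 \<le> y" "0 < c" "0 \<le> W" "y\<^sup>2 \<le> c * W * (y + W)"
  shows "y \<le> c * W * quad_root c"
proof (rule ccontr)
  define m where "m = c * W"
  have "0 \<le> m"
    using assms by (simp add: m_def)
  assume "\<not> ?thesis"
  then have "m * quad_root c < y"
    by (simp add: m_def)
  moreover have "m \<le> m * quad_root c"
    using mult_left_mono[OF quad_root_ge_1[OF assms(2)] \<open>0 \<le> m\<close>] by simp
  ultimately have "0 < (y - m * quad_root c) * (y + m * quad_root c - m)"
    using \<open>0 \<le> m\<close> by (intro mult_pos_pos) linarith+
  moreover have "(m * quad_root c)\<^sup>2 = m * (m * quad_root c) + m * W"
    using quad_root_square[OF assms(2)] assms(2) by (simp add: m_def power2_eq_square field_simps)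
  ultimately show False
    using assms(4) by (simp add: m_def power2_eq_square algebra_simps)
qed

definition theta_const :: "real \<Rightarrow> real \<Rightarrow> real \<Rightarrow> real \<Rightarrow> real" where
  "theta_const q \<kappa> \<Delta> \<rho> = 2 powr (- q / 2) * (1 + sqrt (1 + 4 * \<kappa> powr (-2) * \<Delta> powr (- 2 / q))) powr (q / 2)
     * \<kappa> powr q * \<Delta> * \<rho> powr (1 - q / 2)"

lemma theta_const_eq:
  assumes "0 < \<kappa>" "0 < \<Delta>"
  shows "theta_const q \<kappa> \<Delta> \<rho>
    = quad_root (\<kappa>\<^sup>2 * \<Delta> powr (2 / q)) powr (q / 2) * \<kappa> powr q * \<Delta> * \<rho> powr (1 - q / 2)"
proof -
  have "4 * \<kappa> powr (-2) * \<Delta> powr (- 2 / q) = 4 / (\<kappa>\<^sup>2 * \<Delta> powr (2 / q))"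
    using assms by (simp add: powr_minus divide_simps)
  moreover have "2 powr (- q / 2) * x powr (q / 2) = (x / 2) powr (q / 2)" if "0 \<le> x" for x :: real
    using that by (simp add: powr_divide powr_minus divide_simps)
  ultimately show ?thesis
    by (simp add: theta_const_def quad_root_def)
qed

lemma quadratic_frame_estimate:
  fixes q L U \<Delta> P X y z :: real
  assumes "0 < q" "0 < L" "L \<le> U" "0 < \<Delta>" "0 \<le> X" "0 \<le> y" "0 \<le> z" "0 \<le> P"
    and X: "X powr q \<le> \<Delta> * L powr (- q / 2) * P"
    and z: "z powr (q / 2) \<le> P"
    and y: "y\<^sup>2 \<le> U * X\<^sup>2 * (y + z)"
  shows "y powr (q / 2) \<le> quad_root ((U / L)\<^sup>2 * \<Delta> powr (2 / q)) powr (q / 2) * (U / L) powr q * \<Delta> * P"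
proof -
  define \<kappa> where "\<kappa> = U / L"
  define c where "c = \<kappa>\<^sup>2 * \<Delta> powr (2 / q)"
  define W where "W = P powr (2 / q)"
  have "1 \<le> \<kappa>" "0 < c" "0 \<le> W"
    using assms by (simp_all add: \<kappa>_def c_def W_def)
  have "X\<^sup>2 \<le> (\<Delta> * L powr (- q / 2) * P) powr (2 / q)"
    using powr_mono2[OF _ _ X, of "2 / q"] assms by (simp add: powr_powr_two_over)
  also have "\<dots> = \<Delta> powr (2 / q) * (L powr (- q / 2)) powr (2 / q) * W"
    using assms by (simp add: W_def powr_mult)
  also have "(L powr (- q / 2)) powr (2 / q) = 1 / L"
    using assms by (subst powr_powr) (simp add: powr_minus_divide)
  finally have X2: "X\<^sup>2 \<le> \<Delta> powr (2 / q) * W / L"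
    by simp
  have "z \<le> W"
    using powr_mono2[OF _ _ z, of "2 / q"] assms by (simp add: W_def powr_powr)
  have "y\<^sup>2 \<le> U * (\<Delta> powr (2 / q) * W / L) * (y + W)"
    using y X2 \<open>z \<le> W\<close> assms by (elim order.trans) (intro mult_mono; simp)
  also have "\<dots> = \<kappa> * (\<Delta> powr (2 / q) * W * (y + W))"
    using assms by (simp add: \<kappa>_def)
  \<comment> \<open>wasteful since \<open>\<kappa> \<ge> 1\<close>, but this is the constant appearing in \<open>\<theta>\<close>\<close>
  also have "\<dots> \<le> \<kappa>\<^sup>2 * (\<Delta> powr (2 / q) * W * (y + W))"
    using \<open>1 \<le> \<kappa>\<close> \<open>0 \<le> W\<close> assms by (intro mult_right_mono) (simp_all add: power2_eq_square)
  finally have "y \<le> c * W * quad_root c"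
    using assms \<open>0 < c\<close> \<open>0 \<le> W\<close> by (intro le_quad_root) (simp_all add: c_def mult.assoc)
  then have "y powr (q / 2) \<le> (c * W * quad_root c) powr (q / 2)"
    using assms by (simp add: powr_mono2)
  also have "\<dots> = (\<kappa>\<^sup>2) powr (q / 2) * (\<Delta> powr (2 / q)) powr (q / 2) * W powr (q / 2)
      * quad_root c powr (q / 2)"
    using \<open>0 < c\<close> \<open>0 \<le> W\<close> quad_root_ge_1[of c] by (simp add: c_def powr_mult)
  also have "\<dots> = quad_root c powr (q / 2) * \<kappa> powr q * \<Delta> * P"
    using assms \<open>1 \<le> \<kappa>\<close>
    by (simp add: W_def powr_powr powr_eq_square_powr_half[of \<kappa> q, symmetric])
  finally show ?thesis
    by (simp add: c_def \<kappa>_def)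
qed

text \<open>In the application X = ||D^\<dagger> vS||, y = ||vS||^2, z = ||vR||^2, t and r are the q-masses of v
  on T and on -T, and b = ||A h||_q^q.\<close>
lemma estimates_imply_head_bound:
  fixes q L U \<delta>a \<delta>sa s a t r b X y z :: real
  assumes "0 < q" "0 < L" "L \<le> U" "0 \<le> \<delta>a" "\<delta>sa < 1" "0 < s" "0 < a"
    and "0 \<le> r" "0 \<le> b" "0 \<le> X" "0 \<le> y" "0 \<le> z"
    and E1: "(1 - \<delta>sa) * X powr q \<le> b + (1 + \<delta>a) * L powr (- q / 2) * a powr (q / 2 - 1) * r"
    and E2: "z powr (q / 2) \<le> a powr (q / 2 - 1) * r"
    and E3: "y\<^sup>2 \<le> U * X\<^sup>2 * (y + z)"
    and E4: "t \<le> s powr (1 - q / 2) * y powr (q / 2)"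
  shows "t \<le> theta_const q (U / L) ((1 + \<delta>a) / (1 - \<delta>sa)) (s / a)
    * (r + L powr (q / 2) * a powr (1 - q / 2) * b / (1 + \<delta>a))"
proof -
  define \<Delta> where "\<Delta> = (1 + \<delta>a) / (1 - \<delta>sa)"
  define R where "R = r + L powr (q / 2) * a powr (1 - q / 2) * b / (1 + \<delta>a)"
  define P where "P = a powr (q / 2 - 1) * R"
  have "0 < \<Delta>" "r \<le> R" "0 \<le> P"
    using assms by (simp_all add: \<Delta>_def R_def P_def)
  have "L powr (- q / 2) * L powr (q / 2) = 1" "a powr (q / 2 - 1) * a powr (1 - q / 2) = 1"
    using assms by (simp_all add: powr_add[symmetric])
  moreover have "(1 + \<delta>a) * L powr (- q / 2) * P = (1 + \<delta>a) * L powr (- q / 2) * a powr (q / 2 - 1) * r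
      + (L powr (- q / 2) * L powr (q / 2)) * (a powr (q / 2 - 1) * a powr (1 - q / 2)) * b"
    using assms by (simp add: P_def R_def field_simps add_pos_nonneg)
  ultimately have "(1 + \<delta>a) * L powr (- q / 2) * P
      = b + (1 + \<delta>a) * L powr (- q / 2) * a powr (q / 2 - 1) * r"
    by simp
  with E1 assms have X: "X powr q \<le> \<Delta> * L powr (- q / 2) * P"
    by (simp add: \<Delta>_def field_simps)
  have z: "z powr (q / 2) \<le> P"
    using E2 \<open>r \<le> R\<close> assms by (simp add: P_def) (meson mult_left_mono order.trans powr_ge_zero)
  have "t \<le> s powr (1 - q / 2)
      * (quad_root ((U / L)\<^sup>2 * \<Delta> powr (2 / q)) powr (q / 2) * (U / L) powr q * \<Delta> * P)"
    using E4 quadratic_frame_estimate[OF assms(1-3) \<open>0 < \<Delta>\<close> assms(10-12) \<open>0 \<le> P\<close> X z E3]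
    by (meson mult_left_mono order.trans powr_ge_zero)
  also have "\<dots> = theta_const q (U / L) \<Delta> (s / a) * R"
  proof -
    have "(s / a) powr (1 - q / 2) = s powr (1 - q / 2) * a powr (q / 2 - 1)"
      using assms powr_minus_divide[of a "1 - q / 2"] by (simp add: powr_divide)
    then show ?thesis
      using assms \<open>0 < \<Delta>\<close> by (simp add: theta_const_eq P_def mult_ac)
  qed
  finally show ?thesis
    by (simp add: \<Delta>_def R_def)
qed

text \<open>\<open>1 / quad_root c\<close> is the positive solution of \<open>t\<^sup>2 / c + t = 1\<close>.\<close>
lemma mult_quad_root_less_1:
  assumes "0 < c" "0 \<le> t" "t\<^sup>2 / c + t < 1"
  shows "quad_root c * t < 1"
proof (rule ccontr)
  define z where "z = quad_root c"
  assume "\<not> ?thesis"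
  then have "1 \<le> z * t"
    by (simp add: z_def)
  moreover have "t \<le> z * t"
    using quad_root_ge_1[OF assms(1)] assms(2) by (simp add: z_def mult_le_cancel_right1)
  ultimately have "0 \<le> (z * t - 1) * (z * t - t)"
    by simp
  moreover have "(z * t)\<^sup>2 - t * (z * t - 1) - z * t = (z * t - 1) * (z * t - t)"
    by (simp add: power2_eq_square algebra_simps)
  ultimately have "z * t \<le> (z * t)\<^sup>2 - t * (z * t - 1)"
    by linarith
  also have "\<dots> = t\<^sup>2 * (z\<^sup>2 - z) + t"
    by (simp add: power2_eq_square algebra_simps)
  also have "\<dots> = t\<^sup>2 / c + t"
    using quad_root_square[OF assms(1)] by (simp add: z_def)
  finally show False
    using assms(3) \<open>1 \<le> z * t\<close> by simp
qed

lemma theta_const_less_1: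
  assumes "0 < q" "0 < \<kappa>" "0 < \<Delta>" "0 < \<rho>"
    and small: "\<rho> powr (1 - q / 2) * (\<rho> powr (2 / q - 1) + 1) powr (q / 2) * \<kappa> powr q * \<Delta> < 1"
  shows "theta_const q \<kappa> \<Delta> \<rho> < 1"
proof -
  define c where "c = \<kappa>\<^sup>2 * \<Delta> powr (2 / q)"
  define r where "r = \<rho> powr (2 / q - 1)"
  define t where "t = c * r"
  have "0 < c" "0 < r" "0 < t"
    using assms by (simp_all add: c_def r_def t_def)
  have \<kappa>: "(\<kappa> powr q) powr (2 / q) = \<kappa>\<^sup>2" "(\<kappa>\<^sup>2) powr (q / 2) = \<kappa> powr q"
    using assms by (simp_all add: powr_powr_two_over powr_eq_square_powr_half[of \<kappa> q, symmetric])
  have \<rho>: "(\<rho> powr (1 - q / 2)) powr (2 / q) = r" "r powr (q / 2) = \<rho> powr (1 - q / 2)"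
  proof -
    have "(1 - q / 2) * (2 / q) = 2 / q - 1" "(2 / q - 1) * (q / 2) = 1 - q / 2"
      using assms by (simp_all add: field_simps)
    then show "(\<rho> powr (1 - q / 2)) powr (2 / q) = r" "r powr (q / 2) = \<rho> powr (1 - q / 2)"
      by (simp_all only: r_def powr_powr)
  qed
  have "(\<rho> powr (1 - q / 2) * (r + 1) powr (q / 2) * \<kappa> powr q * \<Delta>) powr (2 / q) = r * (r + 1) * c"
  proof -
    have "((r + 1) powr (q / 2)) powr (2 / q) = r + 1"
      using assms(1) \<open>0 < r\<close> by (simp add: powr_powr)
    then show ?thesis
      using assms(1-4) \<open>0 < r\<close> by (simp add: powr_mult \<kappa> \<rho> c_def mult_ac)
  qed
  also have "\<dots> = t\<^sup>2 / c + t"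
    using \<open>0 < c\<close> by (simp add: t_def power2_eq_square field_simps)
  finally have "t\<^sup>2 / c + t < 1"
    using powr_less_mono2[of "2 / q", OF _ _ small] assms by (simp add: r_def)
  then have "(quad_root c * t) powr (q / 2) < 1"
    using mult_quad_root_less_1[OF \<open>0 < c\<close>] \<open>0 < t\<close> powr_less_mono2[of "q / 2" "quad_root c * t" 1]
      assms(1) quad_root_ge_1[OF \<open>0 < c\<close>] by simp
  also have "(quad_root c * t) powr (q / 2) = theta_const q \<kappa> \<Delta> \<rho>"
    using assms(1-4) quad_root_ge_1[OF \<open>0 < c\<close>] \<open>0 < r\<close>
    by (simp add: theta_const_eq c_def t_def powr_mult powr_powr \<kappa> \<rho> mult_ac)
  finally show ?thesis .
qed

lemma head_qnorm_le:
  fixes D :: "real^'d^'n" and A :: "real^'n^'m" and h :: "real^'n" and T :: "'d set"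
    and q L U \<delta>a \<delta>sa :: real and s a :: nat
  assumes "0 < q" "q \<le> 1" "0 < L" "L \<le> U" "frame_bounds D L U" "0 < s" "0 < a"
    and "rip D A q (s + a) \<delta>sa" "rip D A q a \<delta>a" "card T = s"
  defines "\<theta> \<equiv> theta_const q (U / L) ((1 + \<delta>a) / (1 - \<delta>sa)) (real s / real a)"
  shows "qnorm_pow_on T q (transpose D *v h)
    \<le> \<theta> * qnorm_pow_on (- T) q (transpose D *v h)
      + \<theta> * L powr (q / 2) * real a powr (1 - q / 2) * qnorm_pow q (A *v h) / (1 + \<delta>a)"
proof -
  define v where "v = transpose D *v h"
  define r where "r = qnorm_pow_on (- T) q v"
  obtain B N where B: "B 0 \<subseteq> - T" "\<And>j. card (B j) \<le> a"
      "restrict_vec (- T - B 0) v = (\<Sum>j<N. restrict_vec (B (Suc j)) v)"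
    and tail: "(\<Sum>j<N. norm (restrict_vec (B (Suc j)) v) powr q) \<le> real a powr (q / 2 - 1) * r"
    using block_decomposition[OF assms(1,7), of "- T" v] unfolding r_def by blast
  define S where "S = T \<union> B 0"
  define w where "w j = restrict_vec (B (Suc j)) v" for j
  have rest: "restrict_vec (- S) v = (\<Sum>j<N. w j)"
    using B(3) by (simp add: S_def w_def Diff_eq Int_commute)
  then have decomposition: "restrict_vec S v + (\<Sum>j<N. w j) = transpose D *v h"
    by (simp add: restrict_vec_add_compl v_def flip: rest)
  have "0 \<le> \<delta>a" "\<delta>sa < 1"
    using assms(8,9) by (simp_all add: rip_def)
  have "card S \<le> s + a"
    using card_Un_le[of T "B 0"] B(2)[of 0] assms(10) by (simp add: S_def)
  then have "(1 - \<delta>sa) * norm (dagger D *v restrict_vec S v) powr q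
      \<le> qnorm_pow q (A *v h) + (1 + \<delta>a) * L powr (- q / 2) * (\<Sum>j<N. norm (w j) powr q)"
    using B(2) by (intro rip_head_bound[OF assms(5,3,1,2,8,9) _ _ decomposition])
      (simp_all add: sparse_restrict_vec w_def)
  also have "\<dots> \<le> qnorm_pow q (A *v h) + (1 + \<delta>a) * L powr (- q / 2) * (real a powr (q / 2 - 1) * r)"
    using tail \<open>0 \<le> \<delta>a\<close> by (intro add_left_mono mult_left_mono) (simp_all add: w_def)
  finally have E1: "(1 - \<delta>sa) * norm (dagger D *v restrict_vec S v) powr q
      \<le> qnorm_pow q (A *v h) + (1 + \<delta>a) * L powr (- q / 2) * real a powr (q / 2 - 1) * r"
    by (simp add: mult.assoc)
  have E2: "((norm (restrict_vec (- S) v))\<^sup>2) powr (q / 2) \<le> real a powr (q / 2 - 1) * r"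
    using norm_sum_powr_le[OF assms(1,2), of w "{..<N}"] tail
    by (simp add: rest w_def powr_eq_square_powr_half[symmetric])
  have E3: "((norm (restrict_vec S v))\<^sup>2)\<^sup>2 \<le> U * (norm (dagger D *v restrict_vec S v))\<^sup>2
      * ((norm (restrict_vec S v))\<^sup>2 + (norm (restrict_vec (- S) v))\<^sup>2)"
    using norm_restrict_vec_fourth_le[OF assms(5,3), where h = h and S = S] assms(3,4) by (simp add: v_def)
  have E4: "qnorm_pow_on T q v \<le> real s powr (1 - q / 2) * ((norm (restrict_vec S v))\<^sup>2) powr (q / 2)"
    using qnorm_pow_on_le_card_powr_norm[of q T S v] assms(1,2,10) by (simp add: S_def)
  have "qnorm_pow_on T q v
      \<le> \<theta> * (r + L powr (q / 2) * real a powr (1 - q / 2) * qnorm_pow q (A *v h) / (1 + \<delta>a))"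
    unfolding \<theta>_def using assms(6,7)
    by (intro estimates_imply_head_bound[OF assms(1,3,4) \<open>0 \<le> \<delta>a\<close> \<open>\<delta>sa < 1\<close> _ _ _ _ _ _ _ E1 E2 E3 E4])
      (simp_all add: r_def qnorm_pow_on_nonneg qnorm_pow_nonneg)
  then show ?thesis
    by (simp add: r_def v_def distrib_left mult.assoc)
qed

theorem lemma2p8:
  fixes D :: "real^'d^'n" and A :: "real^'n^'m" and h :: "real^'n"
    and q L U :: real and s a :: nat and T :: "'d set"
  assumes "0 < q" "q \<le> 1"
    and "0 < L" "L \<le> U" "frame_bounds D L U"
    and "0 < s" "s < a"
    and "\<exists>\<delta>. rip D A q (s + a) \<delta>"
    and "card T = s"
    and "\<forall>i\<in>T. \<forall>j\<in>- T. \<bar>(transpose D *v h) $ j\<bar> \<le> \<bar>(transpose D *v h) $ i\<bar>"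
  shows
    "let \<kappa> = U / L; \<rho> = real s / real a;
         \<delta>a = rip_const D A q a; \<delta>sa = rip_const D A q (s + a);
         \<Delta> = (1 + \<delta>a) / (1 - \<delta>sa);
         \<theta> = 2 powr (- q / 2) * (1 + sqrt (1 + 4 * \<kappa> powr (-2) * \<Delta> powr (- 2 / q))) powr (q / 2)
             * \<kappa> powr q * \<Delta> * \<rho> powr (1 - q / 2)
     in qnorm_pow_on T q (transpose D *v h)
          \<le> \<theta> * qnorm_pow_on (- T) q (transpose D *v h)
            + \<theta> * L powr (q / 2) * real a powr (1 - q / 2) * qnorm_pow q (A *v h) / (1 + \<delta>a)
        \<and> (\<rho> powr (1 - q / 2) * (\<rho> powr (2 / q - 1) + 1) powr (q / 2) * \<kappa> powr q * (1 + \<delta>a)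
             < 1 - \<delta>sa \<longrightarrow> \<theta> < 1)"
proof -
  define \<delta>a where "\<delta>a = rip_const D A q a"
  define \<delta>sa where "\<delta>sa = rip_const D A q (s + a)"
  obtain \<delta> where \<delta>: "rip D A q (s + a) \<delta>"
    using assms(8) by blast
  have rip_sa: "rip D A q (s + a) \<delta>sa"
    unfolding \<delta>sa_def by (rule rip_rip_const[OF \<delta>])
  have rip_a: "rip D A q a \<delta>a"
    unfolding \<delta>a_def by (rule rip_rip_const[OF rip_mono[OF \<delta>]]) simp
  have "0 \<le> \<delta>a" "\<delta>sa < 1"
    using rip_a rip_sa by (simp_all add: rip_def)
  have "theta_const q (U / L) ((1 + \<delta>a) / (1 - \<delta>sa)) (real s / real a) < 1"
    if "(real s / real a) powr (1 - q / 2) * ((real s / real a) powr (2 / q - 1) + 1) powr (q / 2)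
      * (U / L) powr q * (1 + \<delta>a) < 1 - \<delta>sa"
    using that assms \<open>0 \<le> \<delta>a\<close> \<open>\<delta>sa < 1\<close> by (intro theta_const_less_1) (simp_all add: field_simps)
  then show ?thesis
    using head_qnorm_le[OF assms(1-6) _ rip_sa rip_a assms(9)] assms(6,7)
    unfolding Let_def theta_const_def[symmetric] \<delta>a_def[symmetric] \<delta>sa_def[symmetric] by simp
qed

end
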